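(* Let $t\ge2$, let $A_t$ be the adjacency matrix of the cycle $C_{2t+1}$ and let $\lambda_t$ be the least eigenvalue of $A_t$. Then the matrix $A_t-\lambda_tI$ is doubly nonnegative, its support graph is $C_{2t+1}$, and it admits no $\mathcal{N}^+$-factorization for any tracial von Neumann algebra $(\mathcal{N},\tau)$.
   Context: The cycle $C_k$ has vertex set $[k]$ with $u\sim v$ iff $u-v\equiv\pm1\pmod k$; its adjacency matrix is $\sum_{u\sim v}(e_ue_v^{T}+e_ve_u^{T})$ (sum over edges). A real symmetric matrix is doubly nonnegative if it is positive semidefinite and entrywise nonnegative. The support graph of a symmetric $n\times n$ matrix $X$ is the graph on $[n]$ with $u\sim v$ iff $u\neq v$ and $X_{uv}\neq0$. A tracial von Neumann algebra $(\mathcal{N},\tau)$ is a unital weak-operator-closed $*$-algebra of bounded operators on a Hilbert space with a linear functional $\tau$ satisfying $\tau(x^*x)\ge0$, $\tau(1)=1$, $\tau(x^*x)=0\Rightarrow x=0$, $\tau(xy)=\tau(yx)$, and weak-operator continuity on the unit ball. $\mathcal{N}^+=\{x^*x:x\in\mathcal{N}\}$. A matrix $X$ admits an $\mathcal{N}^+$-factorization if $X_{ij}=\tau(p_ip_j)$ for some $p_1,\dots,p_n\in\mathcal{N}^+$. *)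

theory Defs
  imports "HOL-Analysis.Analysis"
begin

text \<open>An n x n real matrix is a function nat => nat => real, only entries with indices
  in {0..<n} being relevant. The vertex set [k] of the cycle is taken as {0..<k}.\<close>

definition cycle_adj :: "nat \<Rightarrow> nat \<Rightarrow> nat \<Rightarrow> bool" where
  "cycle_adj k u v \<longleftrightarrow> (Suc u) mod k = v \<or> (Suc v) mod k = u"

definition cycle_adjmat :: "nat \<Rightarrow> nat \<Rightarrow> nat \<Rightarrow> real" where
  "cycle_adjmat k u v = (if cycle_adj k u v then 1 else 0)"

definition idmat :: "nat \<Rightarrow> nat \<Rightarrow> real" where
  "idmat i j = (if i = j then 1 else 0)"

definition is_eigenvalue :: "nat \<Rightarrow> (nat \<Rightarrow> nat \<Rightarrow> real) \<Rightarrow> real \<Rightarrow> bool" where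
  "is_eigenvalue n A lam \<longleftrightarrow>
     (\<exists>v::nat \<Rightarrow> real. (\<exists>i<n. v i \<noteq> 0) \<and>
        (\<forall>i<n. (\<Sum>j<n. A i j * v j) = lam * v i))"

definition is_least_eigenvalue :: "nat \<Rightarrow> (nat \<Rightarrow> nat \<Rightarrow> real) \<Rightarrow> real \<Rightarrow> bool" where
  "is_least_eigenvalue n A lam \<longleftrightarrow>
     is_eigenvalue n A lam \<and> (\<forall>mu. is_eigenvalue n A mu \<longrightarrow> lam \<le> mu)"

definition symmetric_mat :: "nat \<Rightarrow> (nat \<Rightarrow> nat \<Rightarrow> real) \<Rightarrow> bool" where
  "symmetric_mat n X \<longleftrightarrow> (\<forall>i<n. \<forall>j<n. X i j = X j i)"

definition psd :: "nat \<Rightarrow> (nat \<Rightarrow> nat \<Rightarrow> real) \<Rightarrow> bool" where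
  "psd n X \<longleftrightarrow> symmetric_mat n X \<and>
     (\<forall>v::nat \<Rightarrow> real. 0 \<le> (\<Sum>i<n. \<Sum>j<n. v i * X i j * v j))"

definition doubly_nonnegative :: "nat \<Rightarrow> (nat \<Rightarrow> nat \<Rightarrow> real) \<Rightarrow> bool" where
  "doubly_nonnegative n X \<longleftrightarrow> psd n X \<and> (\<forall>i<n. \<forall>j<n. 0 \<le> X i j)"

definition support_adj :: "(nat \<Rightarrow> nat \<Rightarrow> real) \<Rightarrow> nat \<Rightarrow> nat \<Rightarrow> bool" where
  "support_adj X u v \<longleftrightarrow> u \<noteq> v \<and> X u v \<noteq> 0"

text \<open>A complex Hilbert space is modelled as a real Hilbert space ('h::{real_inner,complete_space})
  together with an orthogonal complex structure J (J o J = -id, J isometric); multiplication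
  by the imaginary unit is J.  The complex inner product is then
  <x,y>_C = inner x y + i * inner x (J y) (up to convention), so the real inner product determines it.\<close>

definition complex_structure :: "('h::real_inner \<Rightarrow> 'h) \<Rightarrow> bool" where
  "complex_structure J \<longleftrightarrow> linear J \<and> (\<forall>x. J (J x) = - x) \<and> (\<forall>x y. inner (J x) (J y) = inner x y)"

definition bop :: "('h::real_inner \<Rightarrow> 'h) \<Rightarrow> ('h \<Rightarrow> 'h) \<Rightarrow> bool" where
  "bop J T \<longleftrightarrow> bounded_linear T \<and> (\<forall>x. T (J x) = J (T x))"

definition cscale :: "('h::real_vector \<Rightarrow> 'h) \<Rightarrow> complex \<Rightarrow> ('h \<Rightarrow> 'h) \<Rightarrow> ('h \<Rightarrow> 'h)" where
  "cscale J c T = (\<lambda>x. Re c *\<^sub>R T x + Im c *\<^sub>R J (T x))"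

definition is_adjoint :: "('h::real_inner \<Rightarrow> 'h) \<Rightarrow> ('h \<Rightarrow> 'h) \<Rightarrow> bool" where
  "is_adjoint T S \<longleftrightarrow> (\<forall>x y. inner (T x) y = inner x (S y))"

definition adj :: "('h::real_inner \<Rightarrow> 'h) \<Rightarrow> ('h \<Rightarrow> 'h)" where
  "adj T = (THE S. is_adjoint T S)"

definition wot_closed :: "('h::real_inner \<Rightarrow> 'h) \<Rightarrow> ('h \<Rightarrow> 'h) set \<Rightarrow> bool" where
  "wot_closed J N \<longleftrightarrow>
     (\<forall>T. bop J T \<and>
        (\<forall>F::('h \<times> 'h) set. finite F \<longrightarrow> (\<forall>e>0. \<exists>S\<in>N. \<forall>(x,y)\<in>F. \<bar>inner (S x - T x) y\<bar> < e))
        \<longrightarrow> T \<in> N)"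

definition von_neumann_algebra :: "('h::{real_inner,complete_space} \<Rightarrow> 'h) \<Rightarrow> ('h \<Rightarrow> 'h) set \<Rightarrow> bool" where
  "von_neumann_algebra J N \<longleftrightarrow>
     complex_structure J \<and>
     (\<forall>T\<in>N. bop J T) \<and>
     id \<in> N \<and>
     (\<forall>S\<in>N. \<forall>T\<in>N. (\<lambda>x. S x + T x) \<in> N) \<and>
     (\<forall>c. \<forall>T\<in>N. cscale J c T \<in> N) \<and>
     (\<forall>S\<in>N. \<forall>T\<in>N. S \<circ> T \<in> N) \<and>
     (\<forall>T\<in>N. \<exists>S\<in>N. is_adjoint T S) \<and>
     wot_closed J N"

definition unit_ball_op :: "('h::real_normed_vector \<Rightarrow> 'h) set \<Rightarrow> ('h \<Rightarrow> 'h) set" where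
  "unit_ball_op N = {T\<in>N. onorm T \<le> 1}"

definition tracial_vna ::
  "('h::{real_inner,complete_space} \<Rightarrow> 'h) \<Rightarrow> ('h \<Rightarrow> 'h) set \<Rightarrow> (('h \<Rightarrow> 'h) \<Rightarrow> complex) \<Rightarrow> bool" where
  "tracial_vna J N \<tau> \<longleftrightarrow>
     von_neumann_algebra J N \<and>
     (\<forall>S\<in>N. \<forall>T\<in>N. \<tau> (\<lambda>x. S x + T x) = \<tau> S + \<tau> T) \<and>
     (\<forall>c. \<forall>T\<in>N. \<tau> (cscale J c T) = c * \<tau> T) \<and>
     (\<forall>x\<in>N. Im (\<tau> (adj x \<circ> x)) = 0 \<and> 0 \<le> Re (\<tau> (adj x \<circ> x))) \<and>
     \<tau> id = 1 \<and>
     (\<forall>x\<in>N. \<tau> (adj x \<circ> x) = 0 \<longrightarrow> x = (\<lambda>_. 0)) \<and>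
     (\<forall>x\<in>N. \<forall>y\<in>N. \<tau> (x \<circ> y) = \<tau> (y \<circ> x)) \<and>
     (\<forall>T\<in>unit_ball_op N. \<forall>e>0. \<exists>F::('h \<times> 'h) set. \<exists>d>0. finite F \<and>
        (\<forall>S\<in>unit_ball_op N. (\<forall>(x,y)\<in>F. \<bar>inner (S x - T x) y\<bar> < d) \<longrightarrow> cmod (\<tau> S - \<tau> T) < e))"

definition Npos :: "('h::real_inner \<Rightarrow> 'h) set \<Rightarrow> ('h \<Rightarrow> 'h) set" where
  "Npos N = {adj x \<circ> x | x. x \<in> N}"

definition Npos_factorizable ::
  "('h::real_inner \<Rightarrow> 'h) set \<Rightarrow> (('h \<Rightarrow> 'h) \<Rightarrow> complex) \<Rightarrow> nat \<Rightarrow> (nat \<Rightarrow> nat \<Rightarrow> real) \<Rightarrow> bool" where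
  "Npos_factorizable N \<tau> n X \<longleftrightarrow>
     (\<exists>p::nat \<Rightarrow> ('h \<Rightarrow> 'h). (\<forall>i<n. p i \<in> Npos N) \<and>
        (\<forall>i<n. \<forall>j<n. \<tau> (p i \<circ> p j) = complex_of_real (X i j)))"

end

theory Submission
  imports Defs
begin

text \<open>
  Since \<open>\<lambda>\<close> is the least eigenvalue, the Rayleigh quotient (minimised on the compact unit sphere)
  is bounded below by \<open>\<lambda>\<close>, so \<open>X = A - \<lambda>I\<close> is positive semidefinite; the test vector
  \<open>e\<^sub>0 - e\<^sub>1\<close> gives \<open>\<lambda> \<le> -1\<close>, so the diagonal of \<open>X\<close> is positive and \<open>X\<close> is doubly
  nonnegative with support the cycle.

  Suppose \<open>X\<^sub>i\<^sub>j = \<tau>(p\<^sub>i p\<^sub>j)\<close> with \<open>p\<^sub>i \<in> N\<^sup>+\<close> and let \<open>X w = 0\<close>, \<open>w \<noteq> 0\<close>. Then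
  \<open>q = \<Sum>\<^sub>j w\<^sub>j p\<^sub>j\<close> is self-adjoint with \<open>\<tau>(q\<^sup>2) = w\<^sup>T X w = 0\<close>, so \<open>q = 0\<close> by faithfulness.
  For an edge \<open>ab\<close>, expand \<open>0 = \<tau>(q p\<^sub>b p\<^sub>a)\<close>: a vanishing trace \<open>\<tau>(p\<^sub>i p\<^sub>j)\<close> forces
  \<open>p\<^sub>i p\<^sub>j = 0\<close>, and the cycle has no triangles, so only \<open>w\<^sub>a \<tau>(p\<^sub>a p\<^sub>b p\<^sub>a) + w\<^sub>b \<tau>(p\<^sub>b p\<^sub>a p\<^sub>b)\<close>
  survives. Both traces are positive, hence \<open>w\<close> changes sign strictly along every edge,
  which is impossible on an odd cycle.
\<close>

definition bilin :: "nat \<Rightarrow> (nat \<Rightarrow> nat \<Rightarrow> real) \<Rightarrow> (nat \<Rightarrow> real) \<Rightarrow> (nat \<Rightarrow> real) \<Rightarrow> real" where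
  "bilin n M x y = (\<Sum>i<n. \<Sum>j<n. x i * M i j * y j)"

definition sum_sq :: "nat \<Rightarrow> (nat \<Rightarrow> real) \<Rightarrow> real" where
  "sum_sq n v = (\<Sum>i<n. (v i)\<^sup>2)"

lemma sum_sq_nonneg: "0 \<le> sum_sq n v"
  unfolding sum_sq_def by (simp add: sum_nonneg)

lemma sum_sq_eq_0_iff: "sum_sq n v = 0 \<longleftrightarrow> (\<forall>i<n. v i = 0)"
  unfolding sum_sq_def by (subst sum_nonneg_eq_0_iff) auto

lemma bilin_commute:
  assumes "symmetric_mat n M"
  shows "bilin n M x y = bilin n M y x"
  unfolding bilin_def
  by (subst sum.swap, intro sum.cong refl) (use assms in \<open>simp add: symmetric_mat_def mult.commute\<close>)

lemma bilin_add_scaled: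
  "bilin n M (\<lambda>i. v i + e * g i) (\<lambda>i. v i + e * g i) =
     bilin n M v v + e * bilin n M v g + e * bilin n M g v + e\<^sup>2 * bilin n M g g"
  unfolding bilin_def
  by (simp add: algebra_simps sum.distrib sum_distrib_left power2_eq_square)

lemma mat_vec_diag_shift:
  assumes "i < n"
  shows "(\<Sum>j<n. (M i j - c * idmat i j) * v j) = (\<Sum>j<n. M i j * v j) - c * v i"
proof -
  have "(\<Sum>j<n. c * idmat i j * v j) = (\<Sum>j<n. if j = i then c * v i else 0)"
    by (intro sum.cong) (auto simp: idmat_def)
  then have "(\<Sum>j<n. c * idmat i j * v j) = c * v i"
    using assms by simp
  then show ?thesis by (simp add: left_diff_distrib sum_subtractf)
qed

lemma bilin_diag_shift:
  "bilin n (\<lambda>i j. M i j - c * idmat i j) u u = bilin n M u u - c * sum_sq n u"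
proof -
  have "bilin n (\<lambda>i j. M i j - c * idmat i j) u u = (\<Sum>i<n. u i * (\<Sum>j<n. (M i j - c * idmat i j) * u j))"
    unfolding bilin_def by (simp add: sum_distrib_left mult.assoc)
  also have "\<dots> = (\<Sum>i<n. u i * (\<Sum>j<n. M i j * u j) - c * (u i)\<^sup>2)"
    by (intro sum.cong refl) (simp add: mat_vec_diag_shift right_diff_distrib power2_eq_square)
  also have "\<dots> = bilin n M u u - c * sum_sq n u"
    unfolding bilin_def sum_sq_def by (simp add: sum_subtractf sum_distrib_left mult.assoc)
  finally show ?thesis .
qed

lemma symmetric_mat_diag_shift:
  "symmetric_mat n M \<Longrightarrow> symmetric_mat n (\<lambda>i j. M i j - c * idmat i j)"
  by (simp add: symmetric_mat_def idmat_def)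

lemma psd_iff_bilin: "psd n M \<longleftrightarrow> symmetric_mat n M \<and> (\<forall>v. 0 \<le> bilin n M v v)"
  by (simp add: psd_def bilin_def)

lemma psd_kernel:
  assumes psd: "psd n M" and z: "bilin n M v v = 0"
  shows "\<forall>i<n. (\<Sum>j<n. M i j * v j) = 0"
proof -
  define g where "g i = (\<Sum>j<n. M i j * v j)" for i
  have sym: "symmetric_mat n M" and pos: "\<And>u. 0 \<le> bilin n M u u"
    using psd by (auto simp: psd_iff_bilin)
  have gv: "bilin n M g v = sum_sq n g"
    unfolding bilin_def sum_sq_def g_def power2_eq_square by (simp add: sum_distrib_left mult.assoc)
  have vg: "bilin n M v g = sum_sq n g"
    using gv bilin_commute[OF sym] by metis
  define s where "s = sum_sq n g"
  define c where "c = bilin n M g g"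
  have c0: "0 \<le> c" using pos c_def by auto
  have "s = 0"
  proof (rule ccontr)
    assume "s \<noteq> 0"
    then have sp: "s > 0" using sum_sq_nonneg[of n g] unfolding s_def by linarith
    \<comment> \<open>Perturb \<open>v\<close> along \<open>g = M v\<close> by the amount minimising \<open>2 e s + e\<^sup>2 c\<close>.\<close>
    define e where "e = - s / (c + 1)"
    have ec: "e * (c + 1) = - s" using c0 by (simp add: e_def)
    have "0 \<le> bilin n M (\<lambda>i. v i + e * g i) (\<lambda>i. v i + e * g i)" by (rule pos)
    also have "\<dots> = 2 * e * s + e\<^sup>2 * c" using bilin_add_scaled[of n M v e g] z vg gv s_def c_def by simp
    finally have "0 \<le> (c + 1)\<^sup>2 * (2 * e * s + e\<^sup>2 * c)" by simp
    also have "(c + 1)\<^sup>2 * (2 * e * s + e\<^sup>2 * c) = 2 * s * (e * (c + 1)) * (c + 1) + (e * (c + 1))\<^sup>2 * c"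
      by (simp add: algebra_simps power2_eq_square)
    also have "\<dots> = - (s\<^sup>2 * (c + 2))"
      unfolding ec by (simp add: algebra_simps power2_eq_square)
    moreover have "0 < s\<^sup>2 * (c + 2)" using sp c0 by simp
    ultimately show False by linarith
  qed
  then show ?thesis using sum_sq_eq_0_iff s_def g_def by auto
qed

lemma compact_unit_sphere: "compact {v::nat \<Rightarrow> real. (\<forall>i\<ge>n. v i = 0) \<and> sum_sq n v = 1}"
proof -
  define B where "B i = (if i < n then {-1..1} else {0::real})" for i
  have "compactin (product_topology (\<lambda>i. euclidean) UNIV) (PiE UNIV B)"
    by (subst compactin_PiE) (auto simp: B_def)
  then have "compact (PiE UNIV B)" by (simp add: euclidean_product_topology)
  moreover have "closed {v::nat \<Rightarrow> real. sum_sq n v = 1}"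
    unfolding sum_sq_def
    by (intro closed_Collect_eq continuous_on_sum continuous_on_power continuous_on_const
        continuous_on_product_coordinates)
  ultimately have "compact (PiE UNIV B \<inter> {v. sum_sq n v = 1})" by (rule compact_Int_closed)
  moreover have "PiE UNIV B \<inter> {v. sum_sq n v = 1} = {v. (\<forall>i\<ge>n. v i = 0) \<and> sum_sq n v = 1}"
  proof -
    have "\<bar>v i\<bar> \<le> 1" if "sum_sq n v = 1" "i < n" for v i
    proof -
      have "(v i)\<^sup>2 \<le> sum_sq n v"
        unfolding sum_sq_def using that(2) by (intro member_le_sum) auto
      then show ?thesis using that(1) by (simp add: abs_square_le_1)
    qed
    then show ?thesis
      by (auto simp: B_def PiE_UNIV_domain Pi_iff abs_le_iff) (metis not_le singletonD)
  qed
  ultimately show ?thesis by simp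
qed

lemma rayleigh_minimiser_exists:
  assumes "n \<ge> 1"
  shows "\<exists>v. sum_sq n v = 1 \<and> (\<forall>u. bilin n M v v * sum_sq n u \<le> bilin n M u u)"
proof -
  define S where "S = {v::nat \<Rightarrow> real. (\<forall>i\<ge>n. v i = 0) \<and> sum_sq n v = 1}"
  have "(\<lambda>i. if i = 0 then 1 else 0) \<in> S"
    using assms by (simp add: S_def sum_sq_def if_distrib[of "\<lambda>x. x\<^sup>2"] cong: if_cong)
  then have "S \<noteq> {}" by blast
  moreover have "continuous_on UNIV (\<lambda>v. bilin n M v v)"
    unfolding bilin_def
    by (intro continuous_on_sum continuous_on_mult continuous_on_const continuous_on_product_coordinates)
  then have "continuous_on S (\<lambda>v. bilin n M v v)" by (rule continuous_on_subset) simp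
  ultimately obtain v where "v \<in> S" and vmin: "\<And>y. y \<in> S \<Longrightarrow> bilin n M v v \<le> bilin n M y y"
    using continuous_attains_inf[OF compact_unit_sphere[of n, folded S_def]] by blast
  have "bilin n M v v * sum_sq n u \<le> bilin n M u u" for u
  proof (cases "sum_sq n u = 0")
    case True
    then have "\<forall>i<n. u i = 0" by (simp add: sum_sq_eq_0_iff)
    then show ?thesis using True by (simp add: bilin_def)
  next
    case False
    then have pos: "sum_sq n u > 0" using sum_sq_nonneg[of n u] by linarith
    define r where "r = sqrt (sum_sq n u)"
    have r2: "r\<^sup>2 = sum_sq n u" using pos by (simp add: r_def)
    define u' where "u' i = (if i < n then u i / r else 0)" for i
    have "sum_sq n u' = sum_sq n u / r\<^sup>2"
      unfolding sum_sq_def u'_def by (simp add: power_divide sum_divide_distrib)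
    with r2 False have "u' \<in> S" by (simp add: S_def u'_def)
    then have "bilin n M v v \<le> bilin n M u' u'" by (rule vmin)
    also have "bilin n M u' u' = bilin n M u u / r\<^sup>2"
      unfolding bilin_def u'_def by (simp add: sum_divide_distrib power2_eq_square)
    finally show ?thesis using r2 pos by (simp add: pos_le_divide_eq)
  qed
  then show ?thesis using \<open>v \<in> S\<close> S_def by blast
qed

lemma least_eigenvalue_le_rayleigh:
  assumes sym: "symmetric_mat n M" and least: "is_least_eigenvalue n M lam"
  shows "lam * sum_sq n u \<le> bilin n M u u"
proof -
  have "n \<ge> 1" using least by (auto simp: is_least_eigenvalue_def is_eigenvalue_def)
  then obtain v where v1: "sum_sq n v = 1" and rayleigh: "\<And>u. bilin n M v v * sum_sq n u \<le> bilin n M u u"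
    using rayleigh_minimiser_exists by blast
  define m where "m = bilin n M v v"
  have "psd n (\<lambda>i j. M i j - m * idmat i j)"
    using symmetric_mat_diag_shift[OF sym] rayleigh by (simp add: psd_iff_bilin bilin_diag_shift m_def)
  moreover have "bilin n (\<lambda>i j. M i j - m * idmat i j) v v = 0"
    by (simp add: bilin_diag_shift v1 m_def)
  ultimately have "\<forall>i<n. (\<Sum>j<n. M i j * v j) = m * v i"
    by (auto dest!: psd_kernel simp: mat_vec_diag_shift)
  moreover have "\<exists>i<n. v i \<noteq> 0" using v1 sum_sq_eq_0_iff[of n v] by auto
  ultimately have "lam \<le> m"
    using least by (auto simp: is_least_eigenvalue_def is_eigenvalue_def)
  then have "lam * sum_sq n u \<le> m * sum_sq n u" by (simp add: mult_right_mono sum_sq_nonneg)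
  with rayleigh[of u, folded m_def] show ?thesis by linarith
qed

lemma psd_shift_least_eigenvalue:
  assumes "symmetric_mat n M" and "is_least_eigenvalue n M lam"
  shows "psd n (\<lambda>i j. M i j - lam * idmat i j)"
  using assms symmetric_mat_diag_shift least_eigenvalue_le_rayleigh
  by (simp add: psd_iff_bilin bilin_diag_shift)

lemma sgn_eq_neg_if_pos_combination:
  fixes x y \<alpha> \<beta> :: real
  assumes "\<alpha> > 0" "\<beta> > 0" "x * \<alpha> + y * \<beta> = 0"
  shows "sgn y = - sgn x"
proof -
  have "sgn (y * \<beta>) = - sgn (x * \<alpha>)" using assms(3) by (metis add_eq_0_iff sgn_minus)
  then show ?thesis using assms(1,2) by (simp add: sgn_mult)
qed

lemma alternating_sgn_odd_cycle_eq_zero: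
  fixes w :: "nat \<Rightarrow> real"
  assumes "odd n" and alt: "\<forall>a<n. sgn (w (Suc a mod n)) = - sgn (w a)"
  shows "\<forall>a<n. w a = 0"
proof -
  have sgn_w: "sgn (w k) = (-1) ^ k * sgn (w 0)" if "k < n" for k
    using that
  proof (induction k)
    case (Suc k)
    then show ?case using alt[rule_format, of k] by simp
  qed simp
  from \<open>odd n\<close> obtain m where n: "n = Suc m" and "even m"
    by (metis odd_Suc_minus_one odd_pos Suc_pred even_Suc)
  then have "sgn (w 0) = - sgn (w m)" using alt[rule_format, of m] by simp
  also have "\<dots> = - sgn (w 0)" using sgn_w[of m] n \<open>even m\<close> by simp
  finally have "sgn (w 0) = 0" by simp
  then show ?thesis using sgn_w by (simp add: sgn_eq_0_iff)
qed

lemma adj_eq: "is_adjoint T S \<Longrightarrow> adj T = S"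
proof -
  assume S: "is_adjoint T S"
  have "S' = S" if "is_adjoint T S'" for S'
  proof
    fix y
    have "inner x (S' y - S y) = 0" for x
      using S that by (simp add: is_adjoint_def inner_diff_right)
    from this[of "S' y - S y"] show "S' y = S y" by simp
  qed
  with S show ?thesis unfolding adj_def by blast
qed

lemma is_adjoint_sym: "is_adjoint T S \<Longrightarrow> is_adjoint S T"
  unfolding is_adjoint_def by (metis inner_commute)

lemma is_adjoint_comp: "is_adjoint S S' \<Longrightarrow> is_adjoint T T' \<Longrightarrow> is_adjoint (S \<circ> T) (T' \<circ> S')"
  unfolding is_adjoint_def by simp

lemma cscale_of_real: "cscale J (complex_of_real r) T = (\<lambda>x. r *\<^sub>R T x)"
  unfolding cscale_def by simp

locale tracial =
  fixes J :: "'h::{real_inner,complete_space} \<Rightarrow> 'h" and N :: "('h \<Rightarrow> 'h) set"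
    and \<tau> :: "('h \<Rightarrow> 'h) \<Rightarrow> complex"
  assumes tracial: "tracial_vna J N \<tau>"
begin

lemma von_neumann: "von_neumann_algebra J N"
  using tracial unfolding tracial_vna_def by blast

lemma comp_closed: "S \<in> N \<Longrightarrow> T \<in> N \<Longrightarrow> S \<circ> T \<in> N"
  using von_neumann unfolding von_neumann_algebra_def by blast

lemma add_closed: "S \<in> N \<Longrightarrow> T \<in> N \<Longrightarrow> (\<lambda>x. S x + T x) \<in> N"
  using von_neumann unfolding von_neumann_algebra_def by blast

lemma scaleR_closed: "T \<in> N \<Longrightarrow> (\<lambda>x. r *\<^sub>R T x) \<in> N"
  using von_neumann cscale_of_real[of J r T] unfolding von_neumann_algebra_def by metis

lemma trace_add: "S \<in> N \<Longrightarrow> T \<in> N \<Longrightarrow> \<tau> (\<lambda>x. S x + T x) = \<tau> S + \<tau> T"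
  using tracial unfolding tracial_vna_def by blast

lemma trace_scaleR: "T \<in> N \<Longrightarrow> \<tau> (\<lambda>x. r *\<^sub>R T x) = complex_of_real r * \<tau> T"
  using tracial cscale_of_real[of J r T] unfolding tracial_vna_def by metis

lemma trace_comm: "S \<in> N \<Longrightarrow> T \<in> N \<Longrightarrow> \<tau> (S \<circ> T) = \<tau> (T \<circ> S)"
  using tracial unfolding tracial_vna_def by blast

lemma trace_faithful: "T \<in> N \<Longrightarrow> \<tau> (adj T \<circ> T) = 0 \<Longrightarrow> T = (\<lambda>_. 0)"
  using tracial unfolding tracial_vna_def by blast

lemma trace_positive: "T \<in> N \<Longrightarrow> Im (\<tau> (adj T \<circ> T)) = 0 \<and> 0 \<le> Re (\<tau> (adj T \<circ> T))"
  using tracial unfolding tracial_vna_def by blast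

lemma zero_closed: "(\<lambda>_. 0) \<in> N" and trace_zero: "\<tau> (\<lambda>_. 0) = 0"
proof -
  have "id \<in> N" using von_neumann unfolding von_neumann_algebra_def by blast
  then show "(\<lambda>_. 0) \<in> N" "\<tau> (\<lambda>_. 0) = 0"
    using scaleR_closed[of id 0] trace_scaleR[of id 0] by simp_all
qed

lemma apply_zero: "T \<in> N \<Longrightarrow> T 0 = 0"
proof -
  assume "T \<in> N"
  then have "bounded_linear T" using von_neumann unfolding von_neumann_algebra_def bop_def by blast
  then show ?thesis by (simp add: linear_simps)
qed

lemma sum_scaleR_closed: "\<forall>i\<in>I. T i \<in> N \<Longrightarrow> (\<lambda>z. \<Sum>i\<in>I. c i *\<^sub>R T i z) \<in> N"
proof (induction I rule: infinite_finite_induct)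
  case (insert a I)
  then show ?case using add_closed[OF scaleR_closed] by simp
qed (simp_all add: zero_closed)

lemma trace_sum_scaleR:
  "\<forall>i\<in>I. T i \<in> N \<Longrightarrow> \<tau> (\<lambda>z. \<Sum>i\<in>I. c i *\<^sub>R T i z) = (\<Sum>i\<in>I. complex_of_real (c i) * \<tau> (T i))"
proof (induction I rule: infinite_finite_induct)
  case (insert a I)
  then have "T a \<in> N" "\<forall>i\<in>I. T i \<in> N" by simp_all
  then show ?case
    using insert.IH trace_add[OF scaleR_closed[OF \<open>T a \<in> N\<close>] sum_scaleR_closed[OF \<open>\<forall>i\<in>I. T i \<in> N\<close>]]
      trace_scaleR[OF \<open>T a \<in> N\<close>] insert.hyps by simp
qed (simp_all add: trace_zero)

lemma adj_closed: "T \<in> N \<Longrightarrow> adj T \<in> N" and is_adjoint_adj: "T \<in> N \<Longrightarrow> is_adjoint T (adj T)"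
proof -
  assume "T \<in> N"
  then obtain S where "S \<in> N" "is_adjoint T S"
    using von_neumann unfolding von_neumann_algebra_def by blast
  then show "adj T \<in> N" "is_adjoint T (adj T)" using adj_eq[of T S] by simp_all
qed

lemma adj_adj: "T \<in> N \<Longrightarrow> adj (adj T) = T"
  using is_adjoint_adj is_adjoint_sym adj_eq by blast

lemma adj_comp: "S \<in> N \<Longrightarrow> T \<in> N \<Longrightarrow> adj (S \<circ> T) = adj T \<circ> adj S"
  using is_adjoint_adj is_adjoint_comp adj_eq by blast

lemma NposE:
  assumes "P \<in> Npos N"
  obtains x where "x \<in> N" "P = adj x \<circ> x"
  using assms unfolding Npos_def by blast

lemma Npos_closed: "P \<in> Npos N \<Longrightarrow> P \<in> N"
  by (metis NposE adj_closed comp_closed)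

lemma is_adjoint_Npos: "P \<in> Npos N \<Longrightarrow> is_adjoint P P"
  by (metis NposE is_adjoint_adj is_adjoint_comp is_adjoint_sym)

lemma trace_sum_scaleR_comp:
  assumes "\<forall>i\<in>I. T i \<in> N" "M \<in> N"
  shows "\<tau> ((\<lambda>z. \<Sum>i\<in>I. c i *\<^sub>R T i z) \<circ> M) = (\<Sum>i\<in>I. complex_of_real (c i) * \<tau> (T i \<circ> M))"
proof -
  have "(\<lambda>z. \<Sum>i\<in>I. c i *\<^sub>R T i z) \<circ> M = (\<lambda>z. \<Sum>i\<in>I. c i *\<^sub>R (T i \<circ> M) z)"
    by (simp add: comp_def)
  then show ?thesis using assms comp_closed trace_sum_scaleR[of I "\<lambda>i. T i \<circ> M"] by simp
qed

lemma Npos_comp_eq_zero_iff: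
  assumes "P \<in> Npos N" "Q \<in> Npos N"
  shows "P \<circ> Q = (\<lambda>_. 0) \<longleftrightarrow> \<tau> (P \<circ> Q) = 0"
proof
  assume "P \<circ> Q = (\<lambda>_. 0)"
  then show "\<tau> (P \<circ> Q) = 0" by (simp add: trace_zero)
next
  assume tr0: "\<tau> (P \<circ> Q) = 0"
  obtain x where x: "x \<in> N" "P = adj x \<circ> x" using assms(1) by (rule NposE)
  obtain y where y: "y \<in> N" "Q = adj y \<circ> y" using assms(2) by (rule NposE)
  \<comment> \<open>By traciality \<open>\<tau>(z\<^sup>* z) = \<tau>(P Q)\<close>, and \<open>P Q = x\<^sup>* z y\<close>.\<close>
  define z where "z = x \<circ> adj y"
  have zN: "z \<in> N" using x y by (simp add: z_def adj_closed comp_closed)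
  have "adj z \<circ> z = y \<circ> (adj x \<circ> x \<circ> adj y)"
    using x y by (simp add: z_def adj_comp adj_closed adj_adj comp_assoc)
  then have "\<tau> (adj z \<circ> z) = \<tau> (adj x \<circ> x \<circ> adj y \<circ> y)"
    using x y by (simp add: trace_comm adj_closed comp_closed)
  also have "\<dots> = 0" using tr0 x y by (simp add: comp_assoc)
  finally have "z = (\<lambda>_. 0)" using zN trace_faithful by blast
  then have "adj x \<circ> z \<circ> y = (\<lambda>_. 0)" using x by (simp add: apply_zero adj_closed comp_def)
  then show "P \<circ> Q = (\<lambda>_. 0)" using x y by (simp add: z_def comp_assoc)
qed

lemma Re_trace_sandwich_pos:
  assumes P: "P \<in> Npos N" and Q: "Q \<in> Npos N" and QP: "Q \<circ> P \<noteq> (\<lambda>_. 0)"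
  shows "0 < Re (\<tau> (P \<circ> Q \<circ> P))"
proof -
  obtain y where y: "y \<in> N" "Q = adj y \<circ> y" using Q by (rule NposE)
  define z where "z = y \<circ> P"
  have PN: "P \<in> N" using P by (rule Npos_closed)
  have zN: "z \<in> N" using y PN by (simp add: z_def comp_closed)
  have "adj z = P \<circ> adj y"
    using y PN adj_eq[OF is_adjoint_Npos[OF P]] by (simp add: z_def adj_comp)
  then have z: "adj z \<circ> z = P \<circ> Q \<circ> P" by (simp add: z_def y comp_assoc)
  have "\<tau> (P \<circ> Q \<circ> P) \<noteq> 0"
  proof
    assume "\<tau> (P \<circ> Q \<circ> P) = 0"
    then have "z = (\<lambda>_. 0)" using z zN trace_faithful by simp
    have "Q \<circ> P = adj y \<circ> z" by (simp add: z_def y comp_assoc)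
    also have "\<dots> = (\<lambda>_. 0)" using \<open>z = (\<lambda>_. 0)\<close> y by (simp add: comp_def apply_zero adj_closed)
    finally show False using QP by contradiction
  qed
  moreover have "Im (\<tau> (P \<circ> Q \<circ> P)) = 0" "0 \<le> Re (\<tau> (P \<circ> Q \<circ> P))"
    using trace_positive[OF zN] z by simp_all
  ultimately show ?thesis by (simp add: complex_eq_iff order_le_less)
qed

lemma Gram_kernel_combination_eq_zero:
  fixes n :: nat
  assumes p: "\<forall>i<n. p i \<in> Npos N"
    and gram: "\<forall>i<n. \<forall>j<n. \<tau> (p i \<circ> p j) = complex_of_real (X i j)"
    and ker: "\<forall>i<n. (\<Sum>j<n. X i j * w j) = 0"
  shows "(\<lambda>z. \<Sum>j<n. w j *\<^sub>R p j z) = (\<lambda>_. 0)"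
proof -
  define q where "q = (\<lambda>z. \<Sum>j<n. w j *\<^sub>R p j z)"
  have pN: "\<forall>j\<in>{..<n}. p j \<in> N" using p Npos_closed by blast
  then have qN: "q \<in> N" unfolding q_def by (rule sum_scaleR_closed)
  have "is_adjoint q q"
    using p is_adjoint_Npos
    by (simp add: q_def is_adjoint_def inner_sum_left inner_sum_right)
  then have adj_q: "adj q = q" by (rule adj_eq)
  have "\<tau> (p i \<circ> q) = 0" if i: "i < n" for i
  proof -
    have "\<tau> (p i \<circ> q) = \<tau> (q \<circ> p i)" using i pN qN trace_comm by blast
    also have "\<dots> = (\<Sum>j<n. complex_of_real (w j) * \<tau> (p j \<circ> p i))"
      unfolding q_def using i pN by (simp add: trace_sum_scaleR_comp)
    also have "\<dots> = (\<Sum>j<n. complex_of_real (w j) * complex_of_real (X i j))"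
      using i pN gram trace_comm by (intro sum.cong refl) (metis lessThan_iff)
    also have "\<dots> = complex_of_real (\<Sum>j<n. X i j * w j)"
      by (simp add: mult.commute)
    finally show ?thesis using ker i by simp
  qed
  then have "\<tau> (adj q \<circ> q) = 0"
    unfolding adj_q using qN pN by (simp add: q_def trace_sum_scaleR_comp)
  then show ?thesis using qN trace_faithful q_def by blast
qed

lemma Gram_kernel_sign_flip:
  fixes n :: nat
  assumes p: "\<forall>i<n. p i \<in> Npos N"
    and gram: "\<forall>i<n. \<forall>j<n. \<tau> (p i \<circ> p j) = complex_of_real (X i j)"
    and ker: "\<forall>i<n. (\<Sum>j<n. X i j * w j) = 0"
    and ab: "a < n" "b < n" "a \<noteq> b" and Xab: "X a b \<noteq> 0"
    and sep: "\<forall>j<n. j \<noteq> a \<longrightarrow> j \<noteq> b \<longrightarrow> X j b = 0 \<or> X a j = 0"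
  shows "sgn (w b) = - sgn (w a)"
proof -
  have pN: "\<forall>j\<in>{..<n}. p j \<in> N" using p Npos_closed by blast
  have Pa: "p a \<in> Npos N" and Pb: "p b \<in> Npos N" using p ab by simp_all
  have paN: "p a \<in> N" and pbN: "p b \<in> N" using pN ab by simp_all
  define M where "M = p b \<circ> p a"
  have MN: "M \<in> N" using paN pbN by (simp add: M_def comp_closed)
  have other: "\<tau> (p j \<circ> M) = 0" if j: "j < n" "j \<noteq> a" "j \<noteq> b" for j
  proof -
    have Pj: "p j \<in> Npos N" using p j by simp
    from sep j consider "X j b = 0" | "X a j = 0" by blast
    then show ?thesis
    proof cases
      case 1
      then have "p j \<circ> p b = (\<lambda>_. 0)" using Npos_comp_eq_zero_iff[OF Pj Pb] gram j ab by simp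
      then have "p j \<circ> M = (\<lambda>_. 0) \<circ> p a" by (simp add: M_def comp_assoc[symmetric])
      then show ?thesis by (simp add: comp_def trace_zero)
    next
      case 2
      then have "p a \<circ> p j = (\<lambda>_. 0)" using Npos_comp_eq_zero_iff[OF Pa Pj] gram j ab by simp
      have "\<tau> (p j \<circ> M) = \<tau> (p a \<circ> p j \<circ> p b)"
        using pN j ab trace_comm[of "p j \<circ> p b" "p a"] by (simp add: M_def comp_closed comp_assoc)
      also have "\<dots> = \<tau> ((\<lambda>_. 0) \<circ> p b)" using \<open>p a \<circ> p j = (\<lambda>_. 0)\<close> by simp
      finally show ?thesis by (simp add: trace_zero comp_def)
    qed
  qed
  have "0 = \<tau> ((\<lambda>z. \<Sum>j<n. w j *\<^sub>R p j z) \<circ> M)"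
    using Gram_kernel_combination_eq_zero[OF p gram ker] by (simp add: comp_def trace_zero)
  also have "\<dots> = (\<Sum>j<n. complex_of_real (w j) * \<tau> (p j \<circ> M))"
    using pN MN by (rule trace_sum_scaleR_comp)
  also have "\<dots> = (\<Sum>j\<in>{a, b}. complex_of_real (w j) * \<tau> (p j \<circ> M))"
    by (rule sum.mono_neutral_right) (use ab other in auto)
  also have "\<dots> = complex_of_real (w a) * \<tau> (p a \<circ> p b \<circ> p a) + complex_of_real (w b) * \<tau> (p b \<circ> p a \<circ> p b)"
    using ab pbN paN trace_comm[of "p b" "p b \<circ> p a"] by (simp add: M_def comp_closed comp_assoc)
  finally have "Re 0 = Re (complex_of_real (w a) * \<tau> (p a \<circ> p b \<circ> p a)
      + complex_of_real (w b) * \<tau> (p b \<circ> p a \<circ> p b))" by (rule arg_cong)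
  then have combination: "w a * Re (\<tau> (p a \<circ> p b \<circ> p a)) + w b * Re (\<tau> (p b \<circ> p a \<circ> p b)) = 0"
    by simp
  have "\<tau> (p a \<circ> p b) \<noteq> 0" "\<tau> (p b \<circ> p a) \<noteq> 0"
    using gram ab Xab trace_comm[OF paN pbN] by simp_all
  then have "0 < Re (\<tau> (p a \<circ> p b \<circ> p a))" "0 < Re (\<tau> (p b \<circ> p a \<circ> p b))"
    using Re_trace_sandwich_pos Npos_comp_eq_zero_iff Pa Pb by blast+
  with combination show ?thesis by (simp add: sgn_eq_neg_if_pos_combination mult.commute)
qed

end

lemma Suc_mod_eq_if: "u < n \<Longrightarrow> Suc u mod n = (if Suc u = n then 0 else Suc u)"
  by auto

lemma cycle_adj_iff:
  "u < n \<Longrightarrow> v < n \<Longrightarrow>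
   cycle_adj n u v \<longleftrightarrow> v = Suc u \<or> u = Suc v \<or> (Suc u = n \<and> v = 0) \<or> (Suc v = n \<and> u = 0)"
  unfolding cycle_adj_def by (auto simp: Suc_mod_eq_if)

lemma cycle_adj_irrefl: "2 \<le> n \<Longrightarrow> u < n \<Longrightarrow> \<not> cycle_adj n u u"
  by (simp add: cycle_adj_iff)

lemma cycle_adj_Suc_mod: "cycle_adj n a (Suc a mod n)"
  by (simp add: cycle_adj_def)

lemma cycle_triangle_free:
  assumes "4 \<le> n" "a < n" "j < n" "j \<noteq> a" "j \<noteq> Suc a mod n"
  shows "\<not> cycle_adj n j (Suc a mod n) \<or> \<not> cycle_adj n a j"
  using assms by (auto simp: cycle_adj_iff Suc_mod_eq_if)

lemma symmetric_cycle_adjmat: "symmetric_mat n (cycle_adjmat n)"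
  by (auto simp: symmetric_mat_def cycle_adjmat_def cycle_adj_def)

lemma sum_supported_01:
  fixes f :: "nat \<Rightarrow> real"
  assumes "2 \<le> n" "\<forall>j. j \<noteq> 0 \<longrightarrow> j \<noteq> 1 \<longrightarrow> f j = 0"
  shows "(\<Sum>j<n. f j) = f 0 + f 1"
proof -
  have "(\<Sum>j<n. f j) = (\<Sum>j\<in>{0, 1}. f j)"
    by (rule sum.mono_neutral_right) (use assms in auto)
  then show ?thesis by simp
qed

lemma cycle_least_eigenvalue_le:
  assumes n: "2 \<le> n" and least: "is_least_eigenvalue n (cycle_adjmat n) lam"
  shows "lam \<le> -1"
proof -
  define e where "e i = (if i = 0 then 1 else if i = 1 then -1 else 0 :: real)" for i :: nat
  have "sum_sq n e = 2"
    unfolding sum_sq_def using n by (subst sum_supported_01) (auto simp: e_def)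
  moreover have "bilin n (cycle_adjmat n) e e = -2"
    unfolding bilin_def using n
    by (subst sum_supported_01; auto simp: e_def sum_supported_01 cycle_adjmat_def cycle_adj_iff)
  ultimately show ?thesis
    using least_eigenvalue_le_rayleigh[OF symmetric_cycle_adjmat least, of e] by simp
qed

lemma cycle_shift_doubly_nonnegative:
  assumes "2 \<le> n" and least: "is_least_eigenvalue n (cycle_adjmat n) lam"
  shows "doubly_nonnegative n (\<lambda>i j. cycle_adjmat n i j - lam * idmat i j)"
  using psd_shift_least_eigenvalue[OF symmetric_cycle_adjmat least] cycle_least_eigenvalue_le[OF assms]
  by (auto simp: doubly_nonnegative_def cycle_adjmat_def idmat_def)

lemma cycle_shift_support:
  assumes "2 \<le> n" and least: "is_least_eigenvalue n (cycle_adjmat n) lam" and "u < n"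
  shows "support_adj (\<lambda>i j. cycle_adjmat n i j - lam * idmat i j) u v \<longleftrightarrow> cycle_adj n u v"
  using cycle_least_eigenvalue_le[OF assms(1,2)] cycle_adj_irrefl[OF assms(1,3)]
  by (auto simp: support_adj_def cycle_adjmat_def idmat_def)

lemma (in tracial) odd_cycle_shift_not_Npos_factorizable:
  assumes "odd n" "4 \<le> n" and least: "is_least_eigenvalue n (cycle_adjmat n) lam"
  shows "\<not> Npos_factorizable N \<tau> n (\<lambda>i j. cycle_adjmat n i j - lam * idmat i j)"
proof
  define X where "X i j = cycle_adjmat n i j - lam * idmat i j" for i j
  assume "Npos_factorizable N \<tau> n (\<lambda>i j. cycle_adjmat n i j - lam * idmat i j)"
  then obtain p where p: "\<forall>i<n. p i \<in> Npos N"
    and gram: "\<forall>i<n. \<forall>j<n. \<tau> (p i \<circ> p j) = complex_of_real (X i j)"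
    unfolding Npos_factorizable_def X_def by blast
  obtain w where w: "\<exists>i<n. w i \<noteq> 0" and eig: "\<forall>i<n. (\<Sum>j<n. cycle_adjmat n i j * w j) = lam * w i"
    using least unfolding is_least_eigenvalue_def is_eigenvalue_def by blast
  have ker: "\<forall>i<n. (\<Sum>j<n. X i j * w j) = 0"
    using eig by (simp add: X_def mat_vec_diag_shift)
  have "sgn (w (Suc a mod n)) = - sgn (w a)" if a: "a < n" for a
  proof (rule Gram_kernel_sign_flip[OF p gram ker a])
    let ?b = "Suc a mod n"
    show "?b < n" "a \<noteq> ?b" using a \<open>4 \<le> n\<close> by (auto simp: Suc_mod_eq_if)
    then show "X a ?b \<noteq> 0" by (simp add: X_def cycle_adjmat_def idmat_def cycle_adj_Suc_mod)
    show "\<forall>j<n. j \<noteq> a \<longrightarrow> j \<noteq> ?b \<longrightarrow> X j ?b = 0 \<or> X a j = 0"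
      using cycle_triangle_free[OF \<open>4 \<le> n\<close> a] by (auto simp: X_def cycle_adjmat_def idmat_def)
  qed
  then have "\<forall>a<n. w a = 0" using alternating_sgn_odd_cycle_eq_zero \<open>odd n\<close> by blast
  with w show False by blast
qed

theorem lemma6p3:
  fixes t :: nat and lam :: real
  assumes "t \<ge> 2"
    and "is_least_eigenvalue (2*t+1) (cycle_adjmat (2*t+1)) lam"
  shows "doubly_nonnegative (2*t+1) (\<lambda>i j. cycle_adjmat (2*t+1) i j - lam * idmat i j)
    \<and> (\<forall>u<2*t+1. \<forall>v<2*t+1.
          support_adj (\<lambda>i j. cycle_adjmat (2*t+1) i j - lam * idmat i j) u v \<longleftrightarrow> cycle_adj (2*t+1) u v)
    \<and> (\<forall>(J::'h::{real_inner,complete_space} \<Rightarrow> 'h) N \<tau>. tracial_vna J N \<tau> \<longrightarrow>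
          \<not> Npos_factorizable N \<tau> (2*t+1) (\<lambda>i j. cycle_adjmat (2*t+1) i j - lam * idmat i j))"
proof -
  have "2 \<le> 2*t+1" "4 \<le> 2*t+1" "odd (2*t+1)" using assms(1) by simp_all
  then show ?thesis
    using cycle_shift_doubly_nonnegative cycle_shift_support assms(2)
      tracial.odd_cycle_shift_not_Npos_factorizable[unfolded tracial_def]
    by blast
qed

end
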